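(* For every $k\in\mathbb{N}$ and every $\alpha\in(0,1)$ there exists $\gamma_0>0$ such that for all $0<\gamma\leq\gamma_0$ the following holds. Let $G$ be a digraph on $n$ vertices and let $G_1,\dots,G_k$ be pairwise edge-disjoint subgraphs of $G$ with $\sum_{i\in[k]}e(G_i)\leq\gamma n^2$ and $\Delta^0(G_i)\leq\alpha n$ for each $i\in[k]$. Then each $G_i$ contains a path system $\mathcal{Q}_i$ such that $\bigcup_{i\in[k]}\mathcal{Q}_i$ contains no directed cycle and $e(\mathcal{Q}_i)\geq\lfloor e(G_i)/(\alpha n)\rfloor$ for all $i\in[k]$.
   Context: A path system in a digraph is a set of vertex-disjoint directed paths, identified with the subgraph formed by their vertices and edges; $e(\mathcal{Q})$ is its number of edges. $\Delta^0(H)$ is the maximum over vertices of the maximum of in- and outdegree in $H$. (The paper states the hypothesis as "$0<\gamma\ll\alpha<1$" with $k$ fixed beforehand, i.e. $\gamma$ sufficiently small in terms of $\alpha$ and $k$.) *)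

theory Defs
  imports Main "HOL-Library.Library"
begin

definition digraph :: "'a set \<Rightarrow> ('a \<times> 'a) set \<Rightarrow> bool" where
  "digraph V E \<longleftrightarrow> finite V \<and> E \<subseteq> V \<times> V \<and> (\<forall>v. (v, v) \<notin> E)"

definition outdeg :: "('a \<times> 'a) set \<Rightarrow> 'a \<Rightarrow> nat" where
  "outdeg E v = card {u. (v, u) \<in> E}"

definition indeg :: "('a \<times> 'a) set \<Rightarrow> 'a \<Rightarrow> nat" where
  "indeg E v = card {u. (u, v) \<in> E}"

text \<open>A path system, identified with its edge set: a finite set of edges forming
  vertex-disjoint directed paths, i.e. every vertex has in- and outdegree at most one
  and there is no directed cycle.\<close>
definition path_system :: "('a \<times> 'a) set \<Rightarrow> bool" where
  "path_system Q \<longleftrightarrow> finite Q \<and> acyclic Q \<and>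
     (\<forall>v u w. (v, u) \<in> Q \<and> (v, w) \<in> Q \<longrightarrow> u = w) \<and>
     (\<forall>v u w. (u, v) \<in> Q \<and> (w, v) \<in> Q \<longrightarrow> u = w)"

end

theory Submission
  imports Defs
begin

(* Let t_i = floor (e(G_i) / (alpha n)) and T = sum t_i; the choice of gamma gives
   6 (k + 1) T <= alpha n.  Call a vertex heavy in G_i if its out- or indegree there exceeds
   d = 2 T.  Choose up to t_i heavy vertices of G_i; if fewer than t_i exist, the edges of G_i
   between non-heavy endpoints number at least (t_i - #heavy) alpha n.  First add such light
   edges greedily, keeping the systems balanced in size and giving every new edge an endpoint
   untouched by all systems so far: the union stays acyclic, and since light degrees are at most
   d, a usable edge always exists.  Then attach to each chosen heavy vertex a pendant edge to a
   private neighbour off all light edges and distinct from the chosen heavy vertices; it exists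
   because the light edges, the chosen heavy vertices and the other private neighbours block at
   most 2 T of its more than d = 2 T neighbours.  Pendant edges close no cycle, and a heavy
   vertex is never the tail (resp. head) of a light edge, so every system remains a path system. *)

lemma acyclic_insert_outside_Field:
  assumes "acyclic r" "u \<noteq> v" "u \<notin> Field r \<or> v \<notin> Field r"
  shows "acyclic (insert (u, v) r)"
proof -
  have "(v, u) \<notin> r\<^sup>*"
  proof
    assume "(v, u) \<in> r\<^sup>*"
    then have "(v, u) \<in> r\<^sup>+"
      using assms(2) by (auto dest: rtranclD)
    then have "v \<in> Domain r" "u \<in> Range r"
      by (auto dest: tranclD tranclD2)
    then show False
      using assms(3) by (auto simp: Field_def)
  qed
  then show ?thesis
    using assms(1) by (simp add: acyclic_insert)
qed

lemma card_Field_le: "finite r \<Longrightarrow> card (Field r) \<le> 2 * card r"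
  using card_Un_le[of "Domain r" "Range r"] card_image_le[of r fst] card_image_le[of r snd]
  by (simp add: Field_def Domain_fst Range_snd)

lemma finite_out_neighbours: "finite G \<Longrightarrow> finite {v. (u, v) \<in> G}"
  by (rule finite_subset[of _ "snd ` G"]) force+

lemma finite_in_neighbours: "finite G \<Longrightarrow> finite {u. (u, v) \<in> G}"
  by (rule finite_subset[of _ "fst ` G"]) force+

lemma outdeg_mono: "finite G \<Longrightarrow> H \<subseteq> G \<Longrightarrow> outdeg H u \<le> outdeg G u"
  unfolding outdeg_def by (rule card_mono) (auto simp: finite_out_neighbours)

lemma indeg_mono: "finite G \<Longrightarrow> H \<subseteq> G \<Longrightarrow> indeg H v \<le> indeg G v"
  unfolding indeg_def by (rule card_mono) (auto simp: finite_in_neighbours)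

lemma indeg_eq_outdeg_converse: "indeg G v = outdeg (G\<inverse>) v"
  by (simp add: indeg_def outdeg_def)

lemma card_edges_from_le:
  assumes "finite X" "\<forall>u\<in>X. outdeg G u \<le> d"
  shows "card {e \<in> G. fst e \<in> X} \<le> card X * d"
proof -
  have "{e \<in> G. fst e \<in> X} = (\<Union>u\<in>X. {u} \<times> {v. (u, v) \<in> G})"
    by auto
  then have "card {e \<in> G. fst e \<in> X} \<le> (\<Sum>u\<in>X. outdeg G u)"
    using card_UN_le[OF assms(1), of "\<lambda>u. {u} \<times> {v. (u, v) \<in> G}"]
    by (simp add: outdeg_def card_cartesian_product_singleton)
  also have "\<dots> \<le> card X * d"
    using sum_bounded_above[of X "outdeg G" d] assms(2) by simp
  finally show ?thesis .
qed

lemma card_edges_into_le: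
  assumes "finite X" "\<forall>v\<in>X. indeg G v \<le> d"
  shows "card {e \<in> G. snd e \<in> X} \<le> card X * d"
proof -
  have "{e \<in> G. snd e \<in> X} = prod.swap ` {e \<in> G\<inverse>. fst e \<in> X}"
    by force
  then show ?thesis
    using card_edges_from_le[of X "G\<inverse>" d] assms
    by (simp add: card_image indeg_eq_outdeg_converse)
qed

lemma distinct_representatives_if_large:
  assumes "finite I" "\<forall>x\<in>I. finite (C x) \<and> card I \<le> card (C x)"
  shows "\<exists>f. inj_on f I \<and> (\<forall>x\<in>I. f x \<in> C x)"
proof -
  have "\<exists>f. inj_on f J \<and> (\<forall>x\<in>J. f x \<in> C x)" if "J \<subseteq> I" for J
    using finite_subset[OF that assms(1)] that
  proof (induction J rule: finite_induct)
    case empty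
    then show ?case by auto
  next
    case (insert a J)
    then obtain f where f: "inj_on f J" "\<forall>x\<in>J. f x \<in> C x"
      by auto
    have "card (f ` J) < card (insert a J)"
      using insert card_image_le[of J f] by simp
    also have "\<dots> \<le> card (C a)"
      using insert assms card_mono[OF assms(1) insert(4)] by fastforce
    finally obtain y where "y \<in> C a" "y \<notin> f ` J"
      by (metis card_mono finite_imageI insert.hyps(1) not_le subsetI)
    then have "inj_on (f(a := y)) (insert a J) \<and> (\<forall>x\<in>insert a J. (f(a := y)) x \<in> C x)"
      using f insert(2) by (auto simp: inj_on_def)
    then show ?case by blast
  qed
  then show ?thesis by blast
qed

lemma distinct_representatives_avoiding:
  assumes "finite R" "finite B" "\<forall>r\<in>R. finite (N r) \<and> d < card (N r)" "card B + card R \<le> d"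
  shows "\<exists>f. inj_on f R \<and> (\<forall>r\<in>R. f r \<in> N r - B)"
proof -
  have "finite (N r - B) \<and> card R \<le> card (N r - B)" if "r \<in> R" for r
    using diff_card_le_card_Diff[OF assms(2), of "N r"] assms(3,4) that by auto
  then show ?thesis
    using distinct_representatives_if_large[OF assms(1), of "\<lambda>r. N r - B"] by (meson ballI)
qed

definition light_part :: "nat \<Rightarrow> ('a \<times> 'a) set \<Rightarrow> ('a \<times> 'a) set" where
  "light_part d G = {(u, v) \<in> G. outdeg G u \<le> d \<and> indeg G v \<le> d}"

lemma light_part_subset: "light_part d G \<subseteq> G"
  by (auto simp: light_part_def)

lemma heavy_tail_notin_Domain_light:
  "P \<subseteq> light_part d G \<Longrightarrow> d < outdeg G c \<Longrightarrow> c \<notin> Domain P"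
  by (auto simp: light_part_def)

lemma heavy_head_notin_Range_light:
  "P \<subseteq> light_part d G \<Longrightarrow> d < indeg G c \<Longrightarrow> c \<notin> Range P"
  by (auto simp: light_part_def)

lemma finite_heavy_vertices:
  assumes "finite G"
  shows "finite {v. d < outdeg G v}" "finite {v. d < indeg G v}"
proof -
  have "outdeg G v = 0" if "v \<notin> Domain G" for v
    using that by (auto simp: outdeg_def Domain_iff)
  moreover have "indeg G v = 0" if "v \<notin> Range G" for v
    using that by (auto simp: indeg_def Range_iff)
  ultimately have "{v. d < outdeg G v} \<subseteq> Domain G" "{v. d < indeg G v} \<subseteq> Range G"
    by (metis mem_Collect_eq not_less0 subsetI)+
  then show "finite {v. d < outdeg G v}" "finite {v. d < indeg G v}"
    using assms by (auto intro: finite_subset simp: finite_Domain finite_Range)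
qed

lemma outdeg_light_part_le:
  assumes "finite G"
  shows "outdeg (light_part d G) u \<le> d"
proof (cases "outdeg G u \<le> d")
  case True
  then show ?thesis
    using outdeg_mono[OF assms light_part_subset] le_trans by blast
next
  case False
  then have "{v. (u, v) \<in> light_part d G} = {}"
    by (auto simp: light_part_def)
  then show ?thesis
    by (simp add: outdeg_def)
qed

lemma indeg_light_part_le:
  assumes "finite G"
  shows "indeg (light_part d G) v \<le> d"
proof (cases "indeg G v \<le> d")
  case True
  then show ?thesis
    using indeg_mono[OF assms light_part_subset] le_trans by blast
next
  case False
  then have "{u. (u, v) \<in> light_part d G} = {}"
    by (auto simp: light_part_def)
  then show ?thesis
    by (simp add: indeg_def)
qed

lemma card_le_light_part_plus_heavy:
  assumes "finite G" "\<forall>v. outdeg G v \<le> M \<and> indeg G v \<le> M"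
  shows "card G \<le> card (light_part d G) + (card {v. d < outdeg G v} + card {v. d < indeg G v}) * M"
proof -
  define A where "A = {v. d < outdeg G v}"
  define B where "B = {v. d < indeg G v}"
  define Out where "Out = {e \<in> G. fst e \<in> A}"
  define In where "In = {e \<in> G. snd e \<in> B}"
  have cover: "G = light_part d G \<union> Out \<union> In"
    by (auto simp: light_part_def Out_def In_def A_def B_def)
  have "card G \<le> card (light_part d G \<union> Out) + card In"
    by (subst cover) (rule card_Un_le)
  also have "\<dots> \<le> card (light_part d G) + card Out + card In"
    using card_Un_le[of "light_part d G" Out] by simp
  also have "\<dots> \<le> card (light_part d G) + card A * M + card B * M"
  proof -
    have "finite A" "finite B"
      using finite_heavy_vertices[OF assms(1)] by (simp_all add: A_def B_def)
    then have "card Out \<le> card A * M" "card In \<le> card B * M"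
      using card_edges_from_le[of A G M] card_edges_into_le[of B G M] assms(2)
      by (simp_all add: Out_def In_def)
    then show ?thesis
      by linarith
  qed
  finally show ?thesis
    by (simp add: A_def B_def algebra_simps)
qed

lemma exists_subsets_with_card_sum:
  assumes "finite A" "finite B" "t \<le> card A + card B"
  shows "\<exists>X\<subseteq>A. \<exists>Y\<subseteq>B. card X + card Y = t"
proof -
  obtain X where X: "X \<subseteq> A" "card X = min t (card A)"
    by (meson min.cobounded2 obtain_subset_with_card_n)
  have "t - min t (card A) \<le> card B"
    using assms(3) by linarith
  then obtain Y where Y: "Y \<subseteq> B" "card Y = t - min t (card A)"
    by (meson obtain_subset_with_card_n)
  show ?thesis
    using X Y by (intro exI[of _ X] conjI exI[of _ Y]) auto
qed

lemma heavy_vertex_budget: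
  assumes G: "finite G" "\<forall>v. outdeg G v \<le> M \<and> indeg G v \<le> M" and t: "t * M \<le> card G"
  shows "\<exists>X Y. X \<subseteq> {v. d < outdeg G v} \<and> Y \<subseteq> {v. d < indeg G v} \<and> card X + card Y \<le> t \<and>
           (t - (card X + card Y)) * M \<le> card (light_part d G)"
proof (cases "t \<le> card {v. d < outdeg G v} + card {v. d < indeg G v}")
  case True
  then obtain X Y where "X \<subseteq> {v. d < outdeg G v}" "Y \<subseteq> {v. d < indeg G v}" "card X + card Y = t"
    using exists_subsets_with_card_sum[OF finite_heavy_vertices[OF G(1)]] by meson
  then show ?thesis
    by (intro exI[of _ X] exI[of _ Y]) simp
next
  case False
  have "(t - (card {v. d < outdeg G v} + card {v. d < indeg G v})) * M
      = t * M - (card {v. d < outdeg G v} + card {v. d < indeg G v}) * M"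
    by (simp add: diff_mult_distrib)
  also have "\<dots> \<le> card (light_part d G)"
    using card_le_light_part_plus_heavy[OF G, of d] t by linarith
  finally show ?thesis
    using False by (intro exI[of _ "{v. d < outdeg G v}"] exI[of _ "{v. d < indeg G v}"]) auto
qed

lemma path_system_iff_single_valued:
  "path_system Q \<longleftrightarrow> finite Q \<and> acyclic Q \<and> single_valued Q \<and> single_valued (Q\<inverse>)"
  unfolding path_system_def single_valued_def by blast

definition jointly_acyclic_path_systems :: "nat \<Rightarrow> (nat \<Rightarrow> ('a \<times> 'a) set) \<Rightarrow> bool" where
  "jointly_acyclic_path_systems k Q \<longleftrightarrow> (\<forall>i<k. path_system (Q i)) \<and> acyclic (\<Union>i<k. Q i)"

lemma jointly_acyclic_path_systems_empty: "jointly_acyclic_path_systems k (\<lambda>_. {})"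
  by (simp add: jointly_acyclic_path_systems_def path_system_def acyclic_def)

lemma finite_path_systems:
  "jointly_acyclic_path_systems k Q \<Longrightarrow> i < k \<Longrightarrow> finite (Q i)"
  by (simp add: jointly_acyclic_path_systems_def path_system_def)

lemma jointly_acyclic_path_systems_insert:
  assumes Q: "jointly_acyclic_path_systems k Q" and "i < k" "u \<noteq> v"
    and "u \<notin> Domain (Q i)" "v \<notin> Range (Q i)"
    and "u \<notin> Field (\<Union>j<k. Q j) \<or> v \<notin> Field (\<Union>j<k. Q j)"
  shows "jointly_acyclic_path_systems k (Q(i := insert (u, v) (Q i)))"
proof -
  let ?Q' = "Q(i := insert (u, v) (Q i))"
  have union: "(\<Union>j<k. ?Q' j) = insert (u, v) (\<Union>j<k. Q j)"
    using \<open>i < k\<close> by auto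
  have acyclic: "acyclic (\<Union>j<k. ?Q' j)"
    unfolding union using Q assms(3,6)
    by (intro acyclic_insert_outside_Field) (simp_all add: jointly_acyclic_path_systems_def)
  have "path_system (?Q' i)"
    unfolding path_system_iff_single_valued
  proof (intro conjI)
    show "finite (?Q' i)"
      using finite_path_systems[OF Q \<open>i < k\<close>] by simp
    show "acyclic (?Q' i)"
      using \<open>i < k\<close> by (intro acyclic_subset[OF acyclic]) blast
    show "single_valued (?Q' i)" "single_valued ((?Q' i)\<inverse>)"
      using Q \<open>i < k\<close> assms(4,5)
      by (auto simp: jointly_acyclic_path_systems_def path_system_iff_single_valued
          single_valued_def Domain_iff Range_iff)
  qed
  then show ?thesis
    using Q acyclic by (simp add: jointly_acyclic_path_systems_def)
qed

lemma jointly_acyclic_path_systems_insert_pendant: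
  assumes Q: "jointly_acyclic_path_systems k Q" and i: "i < k"
    and w: "w \<notin> Field (\<Union>j<k. Q j)" "c \<noteq> w"
    and "outward \<Longrightarrow> c \<notin> Domain (Q i)" "\<not> outward \<Longrightarrow> c \<notin> Range (Q i)"
  defines "e \<equiv> if outward then (c, w) else (w, c)"
  shows "jointly_acyclic_path_systems k (Q(i := insert e (Q i)))" "e \<notin> Q i"
proof -
  have ends: "Domain (Q i) \<union> Range (Q i) \<subseteq> Field (\<Union>j<k. Q j)"
    using i by (auto simp: Field_def)
  then show "jointly_acyclic_path_systems k (Q(i := insert e (Q i)))"
    using assms by (cases outward) (auto intro!: jointly_acyclic_path_systems_insert)
  show "e \<notin> Q i"
    using ends w(1) by (cases outward) (auto simp: e_def intro: RangeI DomainI)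
qed

lemma light_edge_available:
  fixes L :: "('a \<times> 'a) set" and P :: "nat \<Rightarrow> ('a \<times> 'a) set"
  assumes L: "finite L" "\<forall>v. outdeg L v \<le> d \<and> indeg L v \<le> d" and "i < k"
    and P: "\<forall>j<k. finite (P j) \<and> card (P j) \<le> card (P i) + 1"
    and large: "(card (P i) + 1) * ((2 * k + 2) * (d + 1)) \<le> card L"
  shows "\<exists>(u, v)\<in>L. u \<notin> Domain (P i) \<and> v \<notin> Range (P i) \<and>
           (u \<notin> Field (\<Union>j<k. P j) \<or> v \<notin> Field (\<Union>j<k. P j))"
proof (rule ccontr)
  assume blocked: "\<not> ?thesis"
  define c where "c = card (P i)"
  define F where "F = Field (\<Union>j<k. P j)"
  have fin: "finite (P i)" "finite (\<Union>j<k. P j)"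
    using P \<open>i < k\<close> by auto
  have "card (\<Union>j<k. P j) \<le> (\<Sum>j<k. card (P j))"
    by (rule card_UN_le) simp
  also have "\<dots> \<le> k * (c + 1)"
    using sum_bounded_above[of "{..<k}" "\<lambda>j. card (P j)" "c + 1"] P by (simp add: c_def)
  finally have card_F: "card F \<le> 2 * (k * (c + 1))"
    using card_Field_le[OF fin(2)] unfolding F_def by linarith
  have card_Domain: "card (Domain (P i)) \<le> c" and card_Range: "card (Range (P i)) \<le> c"
    unfolding c_def Domain_fst Range_snd using card_image_le[OF fin(1)] by blast+
  define Out where "Out = {e \<in> L. fst e \<in> Domain (P i)}"
  define In where "In = {e \<in> L. snd e \<in> Range (P i)}"
  define Fr where "Fr = {e \<in> L. fst e \<in> F}"
  have cover: "L = Out \<union> In \<union> Fr"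
    using blocked unfolding F_def Out_def In_def Fr_def by fastforce
  have "card L \<le> card (Out \<union> In) + card Fr"
    by (subst cover) (rule card_Un_le)
  also have "\<dots> \<le> card Out + card In + card Fr"
    using card_Un_le[of Out In] by simp
  also have "\<dots> \<le> c * d + c * d + 2 * (k * (c + 1)) * d"
  proof (intro add_le_mono)
    show "card Out \<le> c * d"
      using card_edges_from_le[of "Domain (P i)" L d] L(2) card_Domain fin unfolding Out_def
      by (meson finite_Domain le_trans mult_le_mono1)
    show "card In \<le> c * d"
      using card_edges_into_le[of "Range (P i)" L d] L(2) card_Range fin unfolding In_def
      by (meson finite_Range le_trans mult_le_mono1)
    show "card Fr \<le> 2 * (k * (c + 1)) * d"
      using card_edges_from_le[of F L d] L(2) card_F fin unfolding Fr_def F_def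
      by (meson finite_Field le_trans mult_le_mono1)
  qed
  also have "\<dots> < (c + 1) * ((2 * k + 2) * (d + 1))"
    by (simp add: algebra_simps)
  finally show False
    using large by (simp add: c_def)
qed

text \<open>Every unfinished system is at most one edge behind all others; this is what lets
  \<open>light_edge_available\<close> bound the vertices used by all \<open>k\<close> systems by a multiple of
  the size of the one being extended.\<close>

definition balanced_path_systems ::
    "nat \<Rightarrow> (nat \<Rightarrow> ('a \<times> 'a) set) \<Rightarrow> (nat \<Rightarrow> nat) \<Rightarrow> (nat \<Rightarrow> ('a \<times> 'a) set) \<Rightarrow> bool" where
  "balanced_path_systems k L s P \<longleftrightarrow> jointly_acyclic_path_systems k P \<and>
     (\<forall>i<k. P i \<subseteq> L i \<and> card (P i) \<le> s i) \<and>
     (\<forall>i<k. \<forall>j<k. card (P i) < s i \<longrightarrow> card (P j) \<le> card (P i) + 1)"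

lemma balanced_path_systems_extend:
  assumes P: "balanced_path_systems k L s P"
    and L: "\<forall>i<k. finite (L i) \<and> (\<forall>(u, v)\<in>L i. u \<noteq> v) \<and> (\<forall>v. outdeg (L i) v \<le> d \<and> indeg (L i) v \<le> d)"
    and large: "\<forall>i<k. s i * ((2 * k + 2) * (d + 1)) \<le> card (L i)"
    and i: "i < k" "card (P i) < s i"
    and least: "\<forall>j<k. card (P j) < s j \<longrightarrow> card (P i) \<le> card (P j)"
  shows "\<exists>e. e \<notin> P i \<and> balanced_path_systems k L s (P(i := insert e (P i)))"
proof -
  have jointly: "jointly_acyclic_path_systems k P"
    using P by (simp add: balanced_path_systems_def)
  have "\<forall>j<k. finite (P j) \<and> card (P j) \<le> card (P i) + 1"
    using P i finite_path_systems[OF jointly] by (simp add: balanced_path_systems_def)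
  moreover have "(card (P i) + 1) * ((2 * k + 2) * (d + 1)) \<le> s i * ((2 * k + 2) * (d + 1))"
    using i(2) by (intro mult_le_mono1) simp
  then have "(card (P i) + 1) * ((2 * k + 2) * (d + 1)) \<le> card (L i)"
    using large i(1) le_trans by blast
  ultimately obtain u v where uv: "(u, v) \<in> L i" "u \<notin> Domain (P i)" "v \<notin> Range (P i)"
      "u \<notin> Field (\<Union>j<k. P j) \<or> v \<notin> Field (\<Union>j<k. P j)"
    using light_edge_available[of "L i" d i k P] L i by blast
  let ?P' = "P(i := insert (u, v) (P i))"
  have new: "(u, v) \<notin> P i"
    using uv(2) by auto
  have card_P': "card (?P' i) = card (P i) + 1"
    using new finite_path_systems[OF jointly i(1)] by simp
  have "jointly_acyclic_path_systems k ?P'"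
    using jointly i(1) uv L by (intro jointly_acyclic_path_systems_insert) auto
  moreover have "\<forall>j<k. ?P' j \<subseteq> L j \<and> card (?P' j) \<le> s j"
    using P uv(1) i card_P' by (auto simp: balanced_path_systems_def)
  moreover have "card (?P' j) \<le> card (?P' i') + 1"
    if "i' < k" "j < k" "card (?P' i') < s i'" for i' j
  proof (cases "i' = i")
    case True
    have "card (P j) \<le> card (P i) + 1"
      using P i that(2) by (simp add: balanced_path_systems_def)
    then show ?thesis
      using True card_P' by simp
  next
    case False
    then have "card (P i) \<le> card (P i')"
      using least that by simp
    then show ?thesis
      using P False that card_P' by (auto simp: balanced_path_systems_def)
  qed
  ultimately show ?thesis
    using new unfolding balanced_path_systems_def by blast
qed

lemma light_phase:
  assumes L: "\<forall>i<k. finite (L i) \<and> (\<forall>(u, v)\<in>L i. u \<noteq> v) \<and> (\<forall>v. outdeg (L i) v \<le> d \<and> indeg (L i) v \<le> d)"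
    and large: "\<forall>i<k. s i * ((2 * k + 2) * (d + 1)) \<le> card (L i)"
  shows "\<exists>P. jointly_acyclic_path_systems k P \<and> (\<forall>i<k. P i \<subseteq> L i \<and> card (P i) = s i)"
proof -
  let ?size = "\<lambda>P. \<Sum>i<k. card (P i)"
  have "balanced_path_systems k L s (\<lambda>_. {})"
    by (simp add: balanced_path_systems_def jointly_acyclic_path_systems_empty)
  moreover have "?size P < (\<Sum>i<k. s i) + 1" if "balanced_path_systems k L s P" for P
    using that sum_mono[of "{..<k}" "\<lambda>i. card (P i)" s] by (simp add: balanced_path_systems_def)
  ultimately obtain P where P: "balanced_path_systems k L s P"
    and maximal: "\<forall>P'. balanced_path_systems k L s P' \<longrightarrow> ?size P' \<le> ?size P"
    using ex_has_greatest_nat[of "balanced_path_systems k L s" _ ?size] by metis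
  have "card (P i) = s i" if i: "i < k" for i
  proof (rule ccontr)
    assume "card (P i) \<noteq> s i"
    then have "i < k \<and> card (P i) < s i"
      using P i by (simp add: balanced_path_systems_def le_neq_implies_less)
    then obtain i' where i': "i' < k" "card (P i') < s i'"
      and least: "\<forall>j<k. card (P j) < s j \<longrightarrow> card (P i') \<le> card (P j)"
      using ex_has_least_nat[of "\<lambda>j. j < k \<and> card (P j) < s j" i "\<lambda>j. card (P j)"] by blast
    obtain e where e: "e \<notin> P i'" and P': "balanced_path_systems k L s (P(i' := insert e (P i')))"
      using balanced_path_systems_extend[OF P L large i' least] by blast
    have "finite (P i')"
      using P i'(1) finite_path_systems by (auto simp: balanced_path_systems_def)
    then have "?size P < ?size (P(i' := insert e (P i')))"
      using e i'(1) by (intro sum_strict_mono_ex1) auto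
    then show False
      using maximal P' by (meson not_le)
  qed
  then show ?thesis
    using P by (auto simp: balanced_path_systems_def)
qed

text \<open>A request \<open>(i, c, True)\<close> asks for an edge of the \<open>i\<close>-th system leaving \<open>c\<close>,
  a request \<open>(i, c, False)\<close> for one entering \<open>c\<close>; \<open>f\<close> chooses its other end.\<close>

definition pendant_requests :: "nat \<Rightarrow> (nat \<Rightarrow> 'a set) \<Rightarrow> (nat \<Rightarrow> 'a set) \<Rightarrow> (nat \<times> 'a \<times> bool) set" where
  "pendant_requests k X Y = (\<Union>i<k. {i} \<times> (X i \<times> {True} \<union> Y i \<times> {False}))"

fun pendant_edge :: "(nat \<times> 'a \<times> bool \<Rightarrow> 'a) \<Rightarrow> nat \<times> 'a \<times> bool \<Rightarrow> 'a \<times> 'a" where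
  "pendant_edge f (i, c, outward) = (if outward then (c, f (i, c, outward)) else (f (i, c, outward), c))"

lemma Domain_pendant_edges:
  "Domain (pendant_edge f ` {r \<in> V. fst r = i}) \<subseteq> {c. (i, c, True) \<in> V} \<union> f ` V"
  by (force split: if_splits)

lemma Range_pendant_edges:
  "Range (pendant_edge f ` {r \<in> V. fst r = i}) \<subseteq> {c. (i, c, False) \<in> V} \<union> f ` V"
  by (force split: if_splits)

lemma Field_pendant_edges: "Field (pendant_edge f ` V) \<subseteq> fst ` snd ` V \<union> f ` V"
  by (force simp: Field_def split: if_splits)

lemma Field_attached_pendant_edges:
  "Field (\<Union>j<k. P j \<union> pendant_edge f ` {r \<in> V. fst r = j}) \<subseteq> Field (\<Union>j<k. P j) \<union> fst ` snd ` V \<union> f ` V"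
proof -
  have "(\<Union>j<k. P j \<union> pendant_edge f ` {r \<in> V. fst r = j}) \<subseteq> (\<Union>j<k. P j) \<union> pendant_edge f ` V"
    by auto
  then have "Field (\<Union>j<k. P j \<union> pendant_edge f ` {r \<in> V. fst r = j})
      \<subseteq> Field (\<Union>j<k. P j) \<union> Field (pendant_edge f ` V)"
    using mono_Field by (simp only: Field_Un[symmetric])
  then show ?thesis
    using Field_pendant_edges[of f V] by blast
qed

lemma card_tagged_union:
  "finite X \<Longrightarrow> finite Y \<Longrightarrow> card (X \<times> {True} \<union> Y \<times> {False}) = card X + card Y"
  by (simp add: card_Un_disjoint card_cartesian_product disjoint_iff)

lemma finite_pendant_requests:
  "\<forall>i<k. finite (X i) \<and> finite (Y i) \<Longrightarrow> finite (pendant_requests k X Y)"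
  by (auto simp: pendant_requests_def)

lemma card_pendant_requests_slice:
  assumes "i < k" "finite (X i)" "finite (Y i)"
  shows "card {r \<in> pendant_requests k X Y. fst r = i} = card (X i) + card (Y i)"
proof -
  have "{r \<in> pendant_requests k X Y. fst r = i} = {i} \<times> (X i \<times> {True} \<union> Y i \<times> {False})"
    using assms(1) by (auto simp: pendant_requests_def)
  then show ?thesis
    using assms(2,3) by (simp add: card_cartesian_product_singleton card_tagged_union)
qed

lemma card_pendant_requests_le:
  assumes "\<forall>i<k. finite (X i) \<and> finite (Y i)"
  shows "card (pendant_requests k X Y) \<le> (\<Sum>i<k. card (X i) + card (Y i))"
  unfolding pendant_requests_def
  using card_UN_le[of "{..<k}" "\<lambda>i. {i} \<times> (X i \<times> {True} \<union> Y i \<times> {False})"] assms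
  by (simp add: card_cartesian_product_singleton card_tagged_union)

lemma pendant_requests_avoid_light_ends:
  assumes "\<forall>i<k. P i \<subseteq> light_part d (G i)"
    and "\<forall>i<k. X i \<subseteq> {v. d < outdeg (G i) v}" "\<forall>i<k. Y i \<subseteq> {v. d < indeg (G i) v}"
  shows "\<forall>(i, c, outward)\<in>pendant_requests k X Y.
           i < k \<and> (outward \<longrightarrow> c \<notin> Domain (P i)) \<and> (\<not> outward \<longrightarrow> c \<notin> Range (P i))"
proof (clarify)
  fix i c outward
  assume "(i, c, outward) \<in> pendant_requests k X Y"
  then have i: "i < k" and "outward \<Longrightarrow> d < outdeg (G i) c" "\<not> outward \<Longrightarrow> d < indeg (G i) c"
    using assms(2,3) by (auto simp: pendant_requests_def)
  then show "i < k \<and> (outward \<longrightarrow> c \<notin> Domain (P i)) \<and> (\<not> outward \<longrightarrow> c \<notin> Range (P i))"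
    using heavy_tail_notin_Domain_light[OF assms(1)[rule_format, OF i]]
      heavy_head_notin_Range_light[OF assms(1)[rule_format, OF i]] by blast
qed

lemma attach_pendant_edges:
  fixes P :: "nat \<Rightarrow> ('a \<times> 'a) set" and R :: "(nat \<times> 'a \<times> bool) set"
  assumes P: "jointly_acyclic_path_systems k P" and "finite R"
    and R: "\<forall>(i, c, outward)\<in>R. i < k \<and> (outward \<longrightarrow> c \<notin> Domain (P i)) \<and> (\<not> outward \<longrightarrow> c \<notin> Range (P i))"
    and f: "inj_on f R" "\<forall>r\<in>R. f r \<notin> Field (\<Union>i<k. P i) \<union> fst ` snd ` R"
  defines "Q V i \<equiv> P i \<union> pendant_edge f ` {r \<in> V. fst r = i}"
  shows "jointly_acyclic_path_systems k (Q R) \<and> (\<forall>i<k. card (Q R i) = card (P i) + card {r \<in> R. fst r = i})"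
  using \<open>finite R\<close> order_refl[of R]
proof (induction R rule: finite_subset_induct')
  case empty
  then show ?case
    using P by (simp add: Q_def)
next
  case (insert a V)
  obtain i c outward where a: "a = (i, c, outward)"
    by (cases a)
  have i: "i < k"
    using R insert(2) a by auto
  have IH: "jointly_acyclic_path_systems k (Q V)"
    using insert(5) by blast
  have Domain_Q: "Domain (Q V i) \<subseteq> Domain (P i) \<union> {c. (i, c, True) \<in> V} \<union> f ` V"
    and Range_Q: "Range (Q V i) \<subseteq> Range (P i) \<union> {c. (i, c, False) \<in> V} \<union> f ` V"
    using Domain_pendant_edges[of f V i] Range_pendant_edges[of f V i] by (auto simp: Q_def)
  have Field_Q: "Field (\<Union>j<k. Q V j) \<subseteq> Field (\<Union>j<k. P j) \<union> fst ` snd ` V \<union> f ` V"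
    unfolding Q_def by (rule Field_attached_pendant_edges)
  have "c \<in> fst ` snd ` R"
    using insert(2) a by force
  then have "c \<noteq> f a" "c \<notin> f ` V"
    using f(2) insert(2,3) by (metis UnCI, blast)
  have "f a \<notin> f ` V"
    using f(1) insert(2-4) by (simp add: inj_on_image_mem_iff)
  moreover have "f a \<notin> Field (\<Union>j<k. P j) \<union> fst ` snd ` V"
    using f(2) insert(2,3) by blast
  ultimately have "f a \<notin> Field (\<Union>j<k. Q V j)"
    using Field_Q by blast
  moreover have "c \<notin> Domain (Q V i)" if outward
    using Domain_Q R insert(2,4) \<open>c \<notin> f ` V\<close> a that by fastforce
  moreover have "c \<notin> Range (Q V i)" if "\<not> outward"
    using Range_Q R insert(2,4) \<open>c \<notin> f ` V\<close> a that by fastforce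
  moreover have "pendant_edge f a = (if outward then (c, f a) else (f a, c))"
    using a by simp
  ultimately have pendant: "jointly_acyclic_path_systems k ((Q V)(i := insert (pendant_edge f a) (Q V i)))"
      "pendant_edge f a \<notin> Q V i"
    using jointly_acyclic_path_systems_insert_pendant[OF IH i _ \<open>c \<noteq> f a\<close>] by simp_all
  have step: "Q (insert a V) = (Q V)(i := insert (pendant_edge f a) (Q V i))"
    using a by (intro ext) (auto simp: Q_def intro: rev_image_eqI)
  have "card (Q (insert a V) j) = card (P j) + card {r \<in> insert a V. fst r = j}"
    if "j < k" for j
  proof (cases "j = i")
    case True
    then have "{r \<in> insert a V. fst r = j} = insert a {r \<in> V. fst r = j}"
      using a by auto
    then show ?thesis
      using True pendant(2) insert(1,4,5) i finite_path_systems[OF IH i] by (simp add: step)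
  next
    case False
    then have "{r \<in> insert a V. fst r = j} = {r \<in> V. fst r = j}"
      using a by auto
    then show ?thesis
      using False insert(5) that by (simp add: step)
  qed
  then show ?case
    using pendant(1) unfolding step by blast
qed

lemma heavy_phase:
  fixes G P :: "nat \<Rightarrow> ('a \<times> 'a) set"
  assumes G: "\<forall>i<k. finite (G i)"
    and P: "jointly_acyclic_path_systems k P" "\<forall>i<k. P i \<subseteq> light_part d (G i)"
    and X: "\<forall>i<k. X i \<subseteq> {v. d < outdeg (G i) v}" and Y: "\<forall>i<k. Y i \<subseteq> {v. d < indeg (G i) v}"
    and budget: "2 * (\<Sum>i<k. card (P i) + card (X i) + card (Y i)) \<le> d"
  shows "\<exists>Q. jointly_acyclic_path_systems k Q \<and>
           (\<forall>i<k. Q i \<subseteq> G i \<and> card (Q i) = card (P i) + card (X i) + card (Y i))"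
proof -
  have fin_XY: "\<forall>i<k. finite (X i) \<and> finite (Y i)"
  proof (intro allI impI)
    fix i assume i: "i < k"
    show "finite (X i) \<and> finite (Y i)"
      using finite_subset[OF X[rule_format, OF i] finite_heavy_vertices(1)[OF G[rule_format, OF i]]]
        finite_subset[OF Y[rule_format, OF i] finite_heavy_vertices(2)[OF G[rule_format, OF i]]] by blast
  qed
  define R where "R = pendant_requests k X Y"
  define N where "N = (\<lambda>(i, c, outward). if outward then {v. (c, v) \<in> G i} else {u. (u, c) \<in> G i})"
  define B where "B = Field (\<Union>i<k. P i) \<union> fst ` snd ` R"
  have "finite R" "finite B"
    using fin_XY finite_path_systems[OF P(1)]
    by (simp_all add: R_def B_def finite_pendant_requests finite_Field)
  have "card (Field (\<Union>i<k. P i)) \<le> 2 * (\<Sum>i<k. card (P i))"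
    using card_Field_le[of "\<Union>i<k. P i"] card_UN_le[of "{..<k}" P] finite_path_systems[OF P(1)] by simp
  then have "card B + card R \<le> d"
    using budget card_pendant_requests_le[OF fin_XY] card_Un_le[of "Field (\<Union>i<k. P i)" "fst ` snd ` R"]
      card_image_le[OF \<open>finite R\<close>, of "fst \<circ> snd"]
    by (simp add: R_def B_def sum.distrib image_comp)
  moreover have "\<forall>r\<in>R. finite (N r) \<and> d < card (N r)"
    using X Y G unfolding R_def pendant_requests_def
    by (fastforce simp: N_def outdeg_def indeg_def finite_out_neighbours finite_in_neighbours)
  ultimately obtain f where f: "inj_on f R" "\<forall>r\<in>R. f r \<in> N r - B"
    using distinct_representatives_avoiding[OF \<open>finite R\<close> \<open>finite B\<close>] by blast
  have "\<forall>r\<in>R. f r \<notin> Field (\<Union>i<k. P i) \<union> fst ` snd ` R"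
    using f(2) by (simp add: B_def)
  moreover have "\<forall>(i, c, outward)\<in>R. i < k \<and> (outward \<longrightarrow> c \<notin> Domain (P i)) \<and> (\<not> outward \<longrightarrow> c \<notin> Range (P i))"
    unfolding R_def using P(2) X Y by (rule pendant_requests_avoid_light_ends)
  ultimately have Q: "jointly_acyclic_path_systems k (\<lambda>i. P i \<union> pendant_edge f ` {r \<in> R. fst r = i})"
    "\<forall>i<k. card (P i \<union> pendant_edge f ` {r \<in> R. fst r = i}) = card (P i) + card {r \<in> R. fst r = i}"
    using attach_pendant_edges[OF P(1) \<open>finite R\<close> _ f(1)] by simp_all
  have "pendant_edge f r \<in> G (fst r)" if "r \<in> R" for r
    using f(2) that by (cases r) (auto simp: N_def)
  then have "P i \<union> pendant_edge f ` {r \<in> R. fst r = i} \<subseteq> G i" if "i < k" for i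
    using P(2) light_part_subset that by fastforce
  moreover have "\<forall>i<k. card {r \<in> R. fst r = i} = card (X i) + card (Y i)"
    using fin_XY card_pendant_requests_slice unfolding R_def by blast
  ultimately show ?thesis
    using Q by (intro exI[of _ "\<lambda>i. P i \<union> pendant_edge f ` {r \<in> R. fst r = i}"]) simp
qed

lemma path_systems_from_heavy_vertex_budgets:
  fixes G :: "nat \<Rightarrow> ('a \<times> 'a) set" and t :: "nat \<Rightarrow> nat"
  assumes G: "\<forall>i<k. finite (G i) \<and> (\<forall>(u, v)\<in>G i. u \<noteq> v)"
    and XY: "\<forall>i<k. X i \<subseteq> {v. d < outdeg (G i) v} \<and> Y i \<subseteq> {v. d < indeg (G i) v} \<and>
      card (X i) + card (Y i) \<le> t i \<and>
      (t i - (card (X i) + card (Y i))) * ((2 * k + 2) * (d + 1)) \<le> card (light_part d (G i))"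
    and d: "2 * (\<Sum>i<k. t i) \<le> d"
  shows "\<exists>Q. jointly_acyclic_path_systems k Q \<and> (\<forall>i<k. Q i \<subseteq> G i \<and> card (Q i) = t i)"
proof -
  define s where "s i = t i - (card (X i) + card (Y i))" for i
  have light: "\<forall>i<k. finite (light_part d (G i)) \<and> (\<forall>(u, v)\<in>light_part d (G i). u \<noteq> v) \<and>
      (\<forall>v. outdeg (light_part d (G i)) v \<le> d \<and> indeg (light_part d (G i)) v \<le> d)"
  proof (intro allI impI)
    fix i assume "i < k"
    then have "finite (G i)" "\<forall>(u, v)\<in>G i. u \<noteq> v"
      using G by simp_all
    then show "finite (light_part d (G i)) \<and> (\<forall>(u, v)\<in>light_part d (G i). u \<noteq> v) \<and>
        (\<forall>v. outdeg (light_part d (G i)) v \<le> d \<and> indeg (light_part d (G i)) v \<le> d)"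
      using light_part_subset[of d "G i"] outdeg_light_part_le indeg_light_part_le
      by (auto intro: finite_subset)
  qed
  moreover have "\<forall>i<k. s i * ((2 * k + 2) * (d + 1)) \<le> card (light_part d (G i))"
  proof (intro allI impI)
    fix i assume "i < k"
    then show "s i * ((2 * k + 2) * (d + 1)) \<le> card (light_part d (G i))"
      using XY unfolding s_def by blast
  qed
  ultimately obtain P where P: "jointly_acyclic_path_systems k P"
    "\<forall>i<k. P i \<subseteq> light_part d (G i) \<and> card (P i) = s i"
    using light_phase[of k "\<lambda>i. light_part d (G i)" d s] by blast
  have "(\<Sum>i<k. card (P i) + card (X i) + card (Y i)) = (\<Sum>i<k. t i)"
    using P(2) XY by (intro sum.cong) (auto simp: s_def)
  then have "2 * (\<Sum>i<k. card (P i) + card (X i) + card (Y i)) \<le> d"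
    using d by simp
  moreover have "\<forall>i<k. finite (G i)" "\<forall>i<k. P i \<subseteq> light_part d (G i)"
    "\<forall>i<k. X i \<subseteq> {v. d < outdeg (G i) v}" "\<forall>i<k. Y i \<subseteq> {v. d < indeg (G i) v}"
    using G P(2) XY by simp_all
  ultimately obtain Q where Q: "jointly_acyclic_path_systems k Q"
    "\<forall>i<k. Q i \<subseteq> G i \<and> card (Q i) = card (P i) + card (X i) + card (Y i)"
    using heavy_phase[OF _ P(1)] by blast
  have "card (Q i) = t i" if "i < k" for i
    using Q(2)[rule_format, OF that] P(2)[rule_format, OF that] XY[rule_format, OF that]
    by (auto simp: s_def)
  then show ?thesis
    using Q by blast
qed

lemma path_systems_of_prescribed_sizes:
  fixes G :: "nat \<Rightarrow> ('a \<times> 'a) set" and t :: "nat \<Rightarrow> nat"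
  assumes G: "\<forall>i<k. finite (G i) \<and> (\<forall>(u, v)\<in>G i. u \<noteq> v) \<and> (\<forall>v. outdeg (G i) v \<le> M \<and> indeg (G i) v \<le> M)"
    and t: "\<forall>i<k. t i * M \<le> card (G i)"
    and M: "6 * (k + 1) * (\<Sum>i<k. t i) \<le> M"
  shows "\<exists>Q. jointly_acyclic_path_systems k Q \<and> (\<forall>i<k. Q i \<subseteq> G i \<and> card (Q i) = t i)"
proof (cases "(\<Sum>i<k. t i) = 0")
  case True
  then show ?thesis
    by (intro exI[of _ "\<lambda>_. {}"]) (simp add: jointly_acyclic_path_systems_empty)
next
  case False
  define d where "d = 2 * (\<Sum>i<k. t i)"
  have "d + 1 \<le> 3 * (\<Sum>i<k. t i)"
    using False unfolding d_def by linarith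
  then have "(2 * k + 2) * (d + 1) \<le> 6 * (k + 1) * (\<Sum>i<k. t i)"
    using mult_le_mono2[of "d + 1" "3 * (\<Sum>i<k. t i)" "2 * k + 2"] by (simp add: algebra_simps)
  then have dM: "(2 * k + 2) * (d + 1) \<le> M"
    using M by (rule le_trans)
  have "\<exists>X Y. X \<subseteq> {v. d < outdeg (G i) v} \<and> Y \<subseteq> {v. d < indeg (G i) v} \<and>
      card X + card Y \<le> t i \<and> (t i - (card X + card Y)) * M \<le> card (light_part d (G i))"
    if "i < k" for i
    using heavy_vertex_budget[of "G i" M "t i" d] G t that by blast
  then obtain X Y where XY: "\<forall>i<k. X i \<subseteq> {v. d < outdeg (G i) v} \<and> Y i \<subseteq> {v. d < indeg (G i) v} \<and>
      card (X i) + card (Y i) \<le> t i \<and> (t i - (card (X i) + card (Y i))) * M \<le> card (light_part d (G i))"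
    by metis
  then have XY': "\<forall>i<k. X i \<subseteq> {v. d < outdeg (G i) v} \<and> Y i \<subseteq> {v. d < indeg (G i) v} \<and>
      card (X i) + card (Y i) \<le> t i \<and>
      (t i - (card (X i) + card (Y i))) * ((2 * k + 2) * (d + 1)) \<le> card (light_part d (G i))"
    using dM by (meson le_trans mult_le_mono2)
  have "\<forall>i<k. finite (G i) \<and> (\<forall>(u, v)\<in>G i. u \<noteq> v)"
    using G by simp
  moreover have "2 * (\<Sum>i<k. t i) \<le> d"
    by (simp add: d_def)
  ultimately show ?thesis
    using path_systems_from_heavy_vertex_budgets[OF _ XY'] by blast
qed

lemma nat_floor_divide_mult_le:
  fixes D :: real
  assumes "0 \<le> D"
  shows "nat \<lfloor>real e / D\<rfloor> * nat \<lfloor>D\<rfloor> \<le> e"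
proof (cases "D = 0")
  case True
  then show ?thesis by simp
next
  case False
  have "real (nat \<lfloor>real e / D\<rfloor> * nat \<lfloor>D\<rfloor>) \<le> real e / D * D"
    unfolding of_nat_mult using assms by (intro mult_mono of_nat_floor) auto
  also have "\<dots> = real e"
    using False by simp
  finally show ?thesis
    by linarith
qed

lemma sum_nat_floor_bound:
  fixes e :: "nat \<Rightarrow> nat" and \<alpha> \<gamma> :: real
  assumes "0 < \<alpha>" "\<gamma> \<le> \<alpha>\<^sup>2 / (6 * (real k + 1))" "(\<Sum>i<k. real (e i)) \<le> \<gamma> * real n ^ 2"
  shows "6 * (k + 1) * (\<Sum>i<k. nat \<lfloor>real (e i) / (\<alpha> * real n)\<rfloor>) \<le> nat \<lfloor>\<alpha> * real n\<rfloor>"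
proof (cases "n = 0")
  case True
  then show ?thesis by simp
next
  case False
  define D where "D = \<alpha> * real n"
  define T where "T = (\<Sum>i<k. nat \<lfloor>real (e i) / D\<rfloor>)"
  have D: "0 < D"
    using assms(1) False by (simp add: D_def)
  have "real T * D = (\<Sum>i<k. real (nat \<lfloor>real (e i) / D\<rfloor>) * D)"
    by (simp add: T_def sum_distrib_right)
  also have "\<dots> \<le> (\<Sum>i<k. real (e i))"
    using D by (intro sum_mono) (simp add: pos_le_divide_eq [symmetric])
  also have "\<dots> \<le> \<gamma> * real n ^ 2"
    by (rule assms(3))
  also have "\<dots> \<le> \<alpha>\<^sup>2 / (6 * (real k + 1)) * real n ^ 2"
    using assms(2) by (rule mult_right_mono) simp
  also have "\<dots> = D * D / (6 * (real k + 1))"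
    by (simp add: D_def power2_eq_square)
  finally have "(6 * (real k + 1) * real T) * D \<le> D * D"
    by (simp add: field_simps)
  then have "6 * (real k + 1) * real T \<le> D"
    using D by (rule mult_right_le_imp_le)
  then have "real (6 * (k + 1) * T) \<le> D"
    by (simp add: add.commute)
  then show ?thesis
    using le_nat_floor by (simp add: D_def T_def)
qed

theorem lemma4p3:
  fixes k :: nat and \<alpha> :: real
  assumes "0 < \<alpha>" and "\<alpha> < 1"
  shows "\<exists>\<gamma>0 > (0::real). \<forall>\<gamma>. 0 < \<gamma> \<and> \<gamma> \<le> \<gamma>0 \<longrightarrow>
    (\<forall>(n::nat) (E :: (nat \<times> nat) set) (Gs :: nat \<Rightarrow> (nat \<times> nat) set).
       digraph {..<n} E \<and>
       (\<forall>i<k. Gs i \<subseteq> E) \<and>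
       (\<forall>i<k. \<forall>j<k. i \<noteq> j \<longrightarrow> Gs i \<inter> Gs j = {}) \<and>
       (\<Sum>i<k. real (card (Gs i))) \<le> \<gamma> * real n ^ 2 \<and>
       (\<forall>i<k. \<forall>v. real (outdeg (Gs i) v) \<le> \<alpha> * real n \<and> real (indeg (Gs i) v) \<le> \<alpha> * real n)
       \<longrightarrow> (\<exists>Qs :: nat \<Rightarrow> (nat \<times> nat) set.
             (\<forall>i<k. Qs i \<subseteq> Gs i \<and> path_system (Qs i)) \<and>
             acyclic (\<Union>i<k. Qs i) \<and>
             (\<forall>i<k. of_int \<lfloor>real (card (Gs i)) / (\<alpha> * real n)\<rfloor> \<le> real (card (Qs i)))))"
proof (intro exI[of _ "\<alpha>\<^sup>2 / (6 * (real k + 1))"] conjI allI impI)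
  show "0 < \<alpha>\<^sup>2 / (6 * (real k + 1))"
    using assms(1) by simp
next
  fix \<gamma> :: real and n :: nat and E :: "(nat \<times> nat) set" and Gs :: "nat \<Rightarrow> (nat \<times> nat) set"
  assume \<gamma>: "0 < \<gamma> \<and> \<gamma> \<le> \<alpha>\<^sup>2 / (6 * (real k + 1))"
    and H: "digraph {..<n} E \<and> (\<forall>i<k. Gs i \<subseteq> E) \<and> (\<forall>i<k. \<forall>j<k. i \<noteq> j \<longrightarrow> Gs i \<inter> Gs j = {}) \<and>
      (\<Sum>i<k. real (card (Gs i))) \<le> \<gamma> * real n ^ 2 \<and>
      (\<forall>i<k. \<forall>v. real (outdeg (Gs i) v) \<le> \<alpha> * real n \<and> real (indeg (Gs i) v) \<le> \<alpha> * real n)"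
  define M where "M = nat \<lfloor>\<alpha> * real n\<rfloor>"
  define t where "t i = nat \<lfloor>real (card (Gs i)) / (\<alpha> * real n)\<rfloor>" for i
  have "finite E" "\<forall>(u, v)\<in>E. u \<noteq> v"
    using H by (auto simp: digraph_def finite_subset)
  then have G: "\<forall>i<k. finite (Gs i) \<and> (\<forall>(u, v)\<in>Gs i. u \<noteq> v) \<and> (\<forall>v. outdeg (Gs i) v \<le> M \<and> indeg (Gs i) v \<le> M)"
    using H by (auto simp: M_def le_nat_floor intro: finite_subset)
  have t: "\<forall>i<k. t i * M \<le> card (Gs i)"
    using assms(1) by (simp add: t_def M_def nat_floor_divide_mult_le)
  have M: "6 * (k + 1) * (\<Sum>i<k. t i) \<le> M"
    unfolding t_def M_def using \<gamma> H by (intro sum_nat_floor_bound[OF assms(1), of \<gamma>]) simp_all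
  obtain Q where Q: "jointly_acyclic_path_systems k Q" "\<forall>i<k. Q i \<subseteq> Gs i \<and> card (Q i) = t i"
    using path_systems_of_prescribed_sizes[OF G t M] by blast
  then show "\<exists>Qs. (\<forall>i<k. Qs i \<subseteq> Gs i \<and> path_system (Qs i)) \<and> acyclic (\<Union>i<k. Qs i) \<and>
      (\<forall>i<k. of_int \<lfloor>real (card (Gs i)) / (\<alpha> * real n)\<rfloor> \<le> real (card (Qs i)))"
    using assms(1) by (intro exI[of _ Q]) (auto simp: jointly_acyclic_path_systems_def t_def)
qed

end
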